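(* For any fixed $k\ge 3$, as $t\to\infty$, $$\Pr\big(|Z_k(t) - \mathbb{E}[Z_k(t)]| \geq \sqrt{t\log t}\big) = o(1),$$ where $Z_k(t)$ is the number of vertices of degree $k$ in a Random Apollonian Network after $t$ steps.
   Context: A Random Apollonian Network (RAN) is generated as follows: start (at time $t=0$) with a single triangular face. At each step $t=1,2,\dots$, pick one of the current (bounded) triangular faces uniformly at random, insert a new vertex inside it, and connect it to the three vertices on the boundary of that face, subdividing the face into three new triangular faces. $Z_k(t)$ denotes the number of vertices of degree exactly $k$ after $t$ steps. *)

theory Defs
  imports "HOL-Probability.Probability"
begin

text \<open>A state of a Random Apollonian Network: number of vertices n (vertices are 0..<n),
  the set of bounded triangular faces (each a 3-element vertex set), and the edge set
  (each edge a 2-element vertex set).\<close>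

record ran_state =
  nverts :: nat
  faces :: "nat set set"
  edges :: "nat set set"

definition ran_init :: ran_state where
  "ran_init = \<lparr> nverts = 3, faces = {{0,1,2}}, edges = {{0,1},{1,2},{0,2}} \<rparr>"

definition ran_insert :: "ran_state \<Rightarrow> nat set \<Rightarrow> ran_state" where
  "ran_insert s f =
     \<lparr> nverts = Suc (nverts s),
       faces = (faces s - {f}) \<union> {insert (nverts s) (f - {x}) | x. x \<in> f},
       edges = edges s \<union> {{nverts s, x} | x. x \<in> f} \<rparr>"

definition ran_step :: "ran_state \<Rightarrow> ran_state pmf" where
  "ran_step s = map_pmf (ran_insert s) (pmf_of_set (faces s))"

primrec RAN :: "nat \<Rightarrow> ran_state pmf" where
  "RAN 0 = return_pmf ran_init"
| "RAN (Suc t) = bind_pmf (RAN t) ran_step"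

definition degree :: "ran_state \<Rightarrow> nat \<Rightarrow> nat" where
  "degree s v = card {u. {u, v} \<in> edges s \<and> u \<noteq> v}"

definition Z :: "nat \<Rightarrow> ran_state \<Rightarrow> nat" where
  "Z k s = card {v. v < nverts s \<and> degree s v = k}"

end

theory Submission
  imports Defs "HOL-Real_Asymp.Real_Asymp"
begin

text \<open>
  Let \<open>expected_Z k m s\<close> be the expected value of \<open>Z\<^sub>k\<close> after \<open>m\<close> further steps
  started in state \<open>s\<close>. It has a closed form: a vertex of degree \<open>d\<close> lying in \<open>a\<close> of
  the \<open>F\<close> faces is hit with probability \<open>a/F\<close>, after which both \<open>d\<close> and \<open>a\<close> grow
  by one, while \<open>F\<close> always grows by two. Evaluated along the process, \<open>expected_Z k (t - i)\<close>
  is therefore a Doob martingale from \<open>\<bbbE> Z\<^sub>k(t)\<close> to \<open>Z\<^sub>k(t)\<close>. A step changes the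
  summands only at the three vertices of the chosen face, and each summand is a probability, so
  the new value lies within distance 3 of a point that does not depend on the chosen face. Every
  increment thus has conditional variance at most 9, whence \<open>Var Z\<^sub>k(t) \<le> 9t\<close>, and
  Chebyshev's inequality bounds the probability in question by \<open>9 / ln t\<close>.
\<close>

definition ran_wf :: "ran_state \<Rightarrow> bool" where
  "ran_wf s \<longleftrightarrow> finite (faces s) \<and> faces s \<noteq> {} \<and>
    (\<forall>g\<in>faces s. card g = 3 \<and> g \<subseteq> {..<nverts s}) \<and> (\<forall>e\<in>edges s. e \<subseteq> {..<nverts s})"

definition face_degree :: "ran_state \<Rightarrow> nat \<Rightarrow> nat" where
  "face_degree s v = card {g\<in>faces s. v \<in> g}"

definition split_faces :: "nat \<Rightarrow> nat set \<Rightarrow> nat set set" where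
  "split_faces n f = (\<lambda>x. insert n (f - {x})) ` f"

lemma ran_wf_init: "ran_wf ran_init"
  by (auto simp: ran_wf_def ran_init_def)

lemma nverts_ran_insert [simp]: "nverts (ran_insert s f) = Suc (nverts s)"
  by (simp add: ran_insert_def)

lemma faces_ran_insert: "faces (ran_insert s f) = (faces s - {f}) \<union> split_faces (nverts s) f"
  by (auto simp: ran_insert_def split_faces_def)

lemma inj_on_split_face:
  assumes "n \<notin> f"
  shows "inj_on (\<lambda>x. insert n (f - {x})) f"
proof
  fix x y assume xy: "x \<in> f" "y \<in> f" and eq: "insert n (f - {x}) = insert n (f - {y})"
  show "x = y"
  proof (rule ccontr)
    assume "x \<noteq> y"
    then have "y \<in> insert n (f - {y})"
      using xy eq by blast
    then show False
      using assms xy by auto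
  qed
qed

context
  fixes s :: ran_state and f :: "nat set"
  assumes wf: "ran_wf s" and f: "f \<in> faces s"
begin

private lemma card_face: "card f = 3"
  and face_below: "f \<subseteq> {..<nverts s}"
  and finite_faces: "finite (faces s)"
  using wf f by (auto simp: ran_wf_def)

private lemma finite_face: "finite f"
  using card_face by (metis card.infinite zero_neq_numeral)

private lemma new_vertex_notin_face: "nverts s \<notin> f"
  using face_below by auto

private lemma faces_below: "g \<in> faces s \<Longrightarrow> nverts s \<notin> g"
  using wf by (auto simp: ran_wf_def)

lemma card_split_faces: "card (split_faces (nverts s) f) = 3"
  using card_image[OF inj_on_split_face[OF new_vertex_notin_face]] card_face
  by (simp add: split_faces_def)

lemma ran_wf_insert: "ran_wf (ran_insert s f)"
proof -
  have "card g = 3 \<and> g \<subseteq> {..<Suc (nverts s)}" if g: "g \<in> faces (ran_insert s f)" for g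
  proof (cases "g \<in> faces s")
    case True
    then have "card g = 3" "g \<subseteq> {..<nverts s}"
      using wf by (auto simp: ran_wf_def)
    then show ?thesis
      by auto
  next
    case False
    then obtain x where "x \<in> f" "g = insert (nverts s) (f - {x})"
      using g by (auto simp: faces_ran_insert split_faces_def)
    then show ?thesis
      using card_face finite_face face_below new_vertex_notin_face by (auto simp: card_insert_if)
  qed
  moreover have "e \<subseteq> {..<Suc (nverts s)}" if e: "e \<in> edges (ran_insert s f)" for e
  proof (cases "e \<in> edges s")
    case True
    then have "e \<subseteq> {..<nverts s}"
      using wf by (simp add: ran_wf_def)
    then show ?thesis
      by auto
  next
    case False
    then obtain x where "x \<in> f" "e = {nverts s, x}"
      using e by (auto simp: ran_insert_def)
    then show ?thesis
      using face_below by auto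
  qed
  moreover have "finite (faces (ran_insert s f))" "faces (ran_insert s f) \<noteq> {}"
    using finite_faces finite_face card_split_faces
    by (auto simp: faces_ran_insert split_faces_def)
  ultimately show ?thesis
    unfolding ran_wf_def nverts_ran_insert by blast
qed

lemma card_faces_ran_insert: "card (faces (ran_insert s f)) = card (faces s) + 2"
proof -
  have "(faces s - {f}) \<inter> split_faces (nverts s) f = {}"
    using faces_below by (auto simp: split_faces_def)
  moreover have "card (faces s - {f}) + 1 = card (faces s)"
    using card_Suc_Diff1[OF finite_faces f] by simp
  moreover have "finite (split_faces (nverts s) f)"
    using finite_face by (simp add: split_faces_def)
  ultimately show ?thesis
    unfolding faces_ran_insert by (simp add: card_Un_disjoint finite_faces card_split_faces)
qed

lemma degree_ran_insert_old:
  assumes "v < nverts s"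
  shows "degree (ran_insert s f) v = degree s v + (if v \<in> f then 1 else 0)"
proof -
  let ?N = "{u. {u, v} \<in> edges s \<and> u \<noteq> v}"
  have below: "?N \<subseteq> {..<nverts s}"
    using wf by (auto simp: ran_wf_def)
  have new_edge: "(\<exists>x. {u, v} = {nverts s, x} \<and> x \<in> f) \<longleftrightarrow> v \<in> f \<and> u = nverts s" for u
    using assms by (auto simp: doubleton_eq_iff)
  have "{u. {u, v} \<in> edges (ran_insert s f) \<and> u \<noteq> v} = ?N \<union> (if v \<in> f then {nverts s} else {})"
    using assms by (auto simp: ran_insert_def new_edge)
  moreover have "finite ?N" "nverts s \<notin> ?N"
    using below finite_subset by auto
  ultimately show ?thesis
    by (simp add: degree_def)
qed

lemma degree_ran_insert_new: "degree (ran_insert s f) (nverts s) = 3"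
proof -
  have "{u. {u, nverts s} \<in> edges (ran_insert s f) \<and> u \<noteq> nverts s} = f"
    using wf face_below unfolding ran_insert_def ran_wf_def by (auto simp: doubleton_eq_iff)
  then show ?thesis
    by (simp add: degree_def card_face)
qed

lemma face_degree_ran_insert_old:
  assumes "v < nverts s"
  shows "face_degree (ran_insert s f) v = face_degree s v + (if v \<in> f then 1 else 0)"
proof (cases "v \<in> f")
  case True
  let ?G = "{g\<in>faces s. v \<in> g}"
  let ?S = "(\<lambda>x. insert (nverts s) (f - {x})) ` (f - {v})"
  have "{g\<in>faces (ran_insert s f). v \<in> g} = (?G - {f}) \<union> ?S"
    using True assms by (auto simp: faces_ran_insert split_faces_def)
  moreover have "(?G - {f}) \<inter> ?S = {}"
    using faces_below by auto
  moreover have "card ?S = 2"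
    using card_image[OF inj_on_subset[OF inj_on_split_face[OF new_vertex_notin_face]]]
      card_face finite_face True by auto
  moreover have "Suc (card (?G - {f})) = card ?G"
    using True f finite_faces by (intro card_Suc_Diff1) auto
  ultimately show ?thesis
    using True finite_faces finite_face by (simp add: face_degree_def card_Un_disjoint)
next
  case False
  then have "{g\<in>faces (ran_insert s f). v \<in> g} = {g\<in>faces s. v \<in> g}"
    using assms by (auto simp: faces_ran_insert split_faces_def)
  then show ?thesis
    using False by (simp add: face_degree_def)
qed

lemma face_degree_ran_insert_new: "face_degree (ran_insert s f) (nverts s) = 3"
proof -
  have "{g\<in>faces (ran_insert s f). nverts s \<in> g} = split_faces (nverts s) f"
    using faces_below by (auto simp: faces_ran_insert split_faces_def)
  then show ?thesis
    by (simp add: face_degree_def card_split_faces)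
qed

end

lemma expectation_bind_pmf_finite:
  fixes f :: "'b \<Rightarrow> real"
  assumes fp: "finite (set_pmf p)" and fq: "\<And>x. x \<in> set_pmf p \<Longrightarrow> finite (set_pmf (q x))"
  shows "measure_pmf.expectation (bind_pmf p q) f =
         measure_pmf.expectation p (\<lambda>x. measure_pmf.expectation (q x) f)"
proof -
  let ?Y = "\<Union>x\<in>set_pmf p. set_pmf (q x)"
  have finY: "finite ?Y" using assms by auto
  have "measure_pmf.expectation (bind_pmf p q) f = (\<Sum>y\<in>?Y. f y * pmf (bind_pmf p q) y)"
    by (rule integral_measure_pmf_real) (auto simp: finY)
  also have "\<dots> = (\<Sum>y\<in>?Y. \<Sum>x\<in>set_pmf p. f y * pmf (q x) y * pmf p x)"
    unfolding pmf_bind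
    by (subst integral_measure_pmf_real[where A = "set_pmf p"])
       (auto simp: fp sum_distrib_left mult.assoc)
  also have "\<dots> = (\<Sum>x\<in>set_pmf p. (\<Sum>y\<in>?Y. f y * pmf (q x) y) * pmf p x)"
    by (subst sum.swap) (simp add: sum_distrib_right)
  also have "\<dots> = (\<Sum>x\<in>set_pmf p. measure_pmf.expectation (q x) f * pmf p x)"
    by (intro sum.cong refl arg_cong2[where f = "(*)"] integral_measure_pmf_real[symmetric])
       (auto simp: finY)
  also have "\<dots> = measure_pmf.expectation p (\<lambda>x. measure_pmf.expectation (q x) f)"
    by (rule integral_measure_pmf_real[symmetric]) (auto simp: fp)
  finally show ?thesis .
qed

lemma expectation_square_le_of_bounded_deviation:
  fixes f :: "'a \<Rightarrow> real"
  assumes fin: "finite (set_pmf p)" and dev: "\<And>x. x \<in> set_pmf p \<Longrightarrow> \<bar>f x - b\<bar> \<le> c"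
  shows "measure_pmf.expectation p (\<lambda>x. (f x)\<^sup>2) \<le> (measure_pmf.expectation p f)\<^sup>2 + c\<^sup>2"
proof -
  note int = integrable_measure_pmf_finite[OF fin]
  have "(f x - b)\<^sup>2 \<le> c\<^sup>2" if "x \<in> set_pmf p" for x
    using power_mono[OF dev[OF that] abs_ge_zero, of 2] by simp
  then have "measure_pmf.expectation p (\<lambda>x. (f x - b)\<^sup>2) \<le> measure_pmf.expectation p (\<lambda>x. c\<^sup>2)"
    by (intro integral_mono_AE) (auto simp: int AE_measure_pmf_iff)
  moreover have "measure_pmf.expectation p (\<lambda>x. (f x - b)\<^sup>2) =
      measure_pmf.expectation p (\<lambda>x. (f x)\<^sup>2) - 2 * b * measure_pmf.expectation p f + b\<^sup>2"
    by (simp add: power2_diff int)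
  moreover have "2 * b * measure_pmf.expectation p f \<le> (measure_pmf.expectation p f)\<^sup>2 + b\<^sup>2"
    using zero_le_power2[of "measure_pmf.expectation p f - b"]
    by (simp add: power2_diff algebra_simps)
  ultimately show ?thesis
    by simp
qed

lemma set_pmf_ran_step: "ran_wf s \<Longrightarrow> set_pmf (ran_step s) = ran_insert s ` faces s"
  by (simp add: ran_step_def ran_wf_def)

lemma expectation_ran_step:
  "ran_wf s \<Longrightarrow>
    measure_pmf.expectation (ran_step s) g = (\<Sum>f\<in>faces s. g (ran_insert s f)) / card (faces s)"
  by (simp add: ran_step_def ran_wf_def integral_pmf_of_set)

lemma ran_wf_RAN: "s \<in> set_pmf (RAN t) \<Longrightarrow> ran_wf s"
  by (induction t arbitrary: s) (auto simp: ran_wf_init set_pmf_ran_step ran_wf_insert)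

lemma finite_set_pmf_RAN: "finite (set_pmf (RAN t))"
proof (induction t)
  case (Suc t)
  have "finite (set_pmf (ran_step s))" if "s \<in> set_pmf (RAN t)" for s
    using ran_wf_RAN[OF that] by (simp add: set_pmf_ran_step ran_wf_def)
  then show ?case
    using Suc by simp
qed simp

lemma expectation_RAN_Suc:
  fixes g :: "ran_state \<Rightarrow> real"
  shows "measure_pmf.expectation (RAN (Suc t)) g =
    measure_pmf.expectation (RAN t) (\<lambda>s. measure_pmf.expectation (ran_step s) g)"
  unfolding RAN.simps using finite_set_pmf_RAN ran_wf_RAN
  by (intro expectation_bind_pmf_finite) (auto simp: set_pmf_ran_step ran_wf_def)

lemma expectation_RAN_mono:
  fixes g h :: "ran_state \<Rightarrow> real"
  assumes "\<And>s. ran_wf s \<Longrightarrow> g s \<le> h s"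
  shows "measure_pmf.expectation (RAN t) g \<le> measure_pmf.expectation (RAN t) h"
  using assms ran_wf_RAN
  by (intro integral_mono_AE)
     (auto simp: AE_measure_pmf_iff integrable_measure_pmf_finite[OF finite_set_pmf_RAN])

lemma expectation_RAN_harmonic:
  fixes G :: "nat \<Rightarrow> ran_state \<Rightarrow> real"
  assumes step: "\<And>m s. ran_wf s \<Longrightarrow> measure_pmf.expectation (ran_step s) (G m) = G (Suc m) s"
  shows "measure_pmf.expectation (RAN t) (G m) = G (m + t) ran_init"
proof (induction t arbitrary: m)
  case (Suc t)
  have "measure_pmf.expectation (RAN (Suc t)) (G m) = measure_pmf.expectation (RAN t) (G (Suc m))"
    unfolding expectation_RAN_Suc using step ran_wf_RAN
    by (intro integral_cong_AE) (auto simp: AE_measure_pmf_iff)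
  then show ?case
    using Suc[of "Suc m"] by simp
qed simp

lemma second_moment_RAN_le:
  fixes G :: "nat \<Rightarrow> ran_state \<Rightarrow> real"
  assumes step: "\<And>m s. ran_wf s \<Longrightarrow>
    measure_pmf.expectation (ran_step s) (\<lambda>s'. (G m s')\<^sup>2) \<le> (G (Suc m) s)\<^sup>2 + c"
  shows "measure_pmf.expectation (RAN t) (\<lambda>s. (G m s)\<^sup>2) \<le> (G (m + t) ran_init)\<^sup>2 + c * t"
proof (induction t arbitrary: m)
  case (Suc t)
  have "measure_pmf.expectation (RAN (Suc t)) (\<lambda>s. (G m s)\<^sup>2)
     \<le> measure_pmf.expectation (RAN t) (\<lambda>s. (G (Suc m) s)\<^sup>2 + c)"
    unfolding expectation_RAN_Suc by (rule expectation_RAN_mono) (rule step)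
  also have "\<dots> = measure_pmf.expectation (RAN t) (\<lambda>s. (G (Suc m) s)\<^sup>2) + c"
    by (simp add: integrable_measure_pmf_finite[OF finite_set_pmf_RAN])
  also have "\<dots> \<le> (G (m + Suc t) ran_init)\<^sup>2 + c * Suc t"
    using Suc[of "Suc m"] by (simp add: algebra_simps)
  finally show ?case .
qed simp

lemma variance_RAN_le:
  fixes G :: "nat \<Rightarrow> ran_state \<Rightarrow> real"
  assumes "\<And>m s. ran_wf s \<Longrightarrow> measure_pmf.expectation (ran_step s) (G m) = G (Suc m) s"
    and "\<And>m s. ran_wf s \<Longrightarrow>
      measure_pmf.expectation (ran_step s) (\<lambda>s'. (G m s')\<^sup>2) \<le> (G (Suc m) s)\<^sup>2 + c"
  shows "measure_pmf.variance (RAN t) (G 0) \<le> c * t"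
proof -
  note int = integrable_measure_pmf_finite[OF finite_set_pmf_RAN]
  have "measure_pmf.variance (RAN t) (G 0) =
      measure_pmf.expectation (RAN t) (\<lambda>s. (G 0 s)\<^sup>2) - (measure_pmf.expectation (RAN t) (G 0))\<^sup>2"
    by (rule measure_pmf.variance_eq) (simp_all add: int)
  then show ?thesis
    using second_moment_RAN_le[where G = G and c = c, OF assms(2), of t 0]
      expectation_RAN_harmonic[where G = G, OF assms(1), of t 0]
    by simp
qed

text \<open>\<open>degree_prob k m d a F\<close>: probability that a vertex of degree \<open>d\<close> lying in \<open>a\<close> of the
  \<open>F\<close> faces has degree \<open>k\<close> after \<open>m\<close> further steps; \<open>new_vertex_count k m F\<close>: expected
  number of vertices created during these steps that end with degree \<open>k\<close>.\<close>

fun degree_prob :: "nat \<Rightarrow> nat \<Rightarrow> nat \<Rightarrow> nat \<Rightarrow> nat \<Rightarrow> real" where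
  "degree_prob k 0 d a F = (if d = k then 1 else 0)"
| "degree_prob k (Suc m) d a F =
     real a / real F * degree_prob k m (d + 1) (a + 1) (F + 2)
   + (1 - real a / real F) * degree_prob k m d a (F + 2)"

fun new_vertex_count :: "nat \<Rightarrow> nat \<Rightarrow> nat \<Rightarrow> real" where
  "new_vertex_count k 0 F = 0"
| "new_vertex_count k (Suc m) F = degree_prob k m 3 3 (F + 2) + new_vertex_count k m (F + 2)"

definition expected_Z :: "nat \<Rightarrow> nat \<Rightarrow> ran_state \<Rightarrow> real" where
  "expected_Z k m s =
     (\<Sum>v<nverts s. degree_prob k m (degree s v) (face_degree s v) (card (faces s)))
   + new_vertex_count k m (card (faces s))"

lemma degree_prob_bounds: "a \<le> F \<Longrightarrow> 0 \<le> degree_prob k m d a F \<and> degree_prob k m d a F \<le> 1"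
proof (induction m arbitrary: d a F)
  case (Suc m)
  define p where "p = real a / real F"
  define x where "x = degree_prob k m (d + 1) (a + 1) (F + 2)"
  define y where "y = degree_prob k m d a (F + 2)"
  have "0 \<le> p" "p \<le> 1"
    using Suc.prems by (auto simp: p_def divide_le_eq_1)
  moreover have "0 \<le> x" "x \<le> 1" "0 \<le> y" "y \<le> 1"
    using Suc.IH Suc.prems by (auto simp: x_def y_def)
  ultimately have "0 \<le> p * x + (1 - p) * y \<and> p * x + (1 - p) * y \<le> 1"
    using convex_bound_le[of x 1 y p "1 - p"] by (simp add: mult_nonneg_nonneg)
  then show ?case
    by (simp add: p_def x_def y_def)
qed simp

lemma face_degree_le: "ran_wf s \<Longrightarrow> face_degree s v \<le> card (faces s)"
  unfolding face_degree_def ran_wf_def by (intro card_mono) auto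

lemma expected_Z_0: "expected_Z k 0 s = real (Z k s)"
  by (simp add: expected_Z_def Z_def sum.If_cases Int_def)

context
  fixes s :: ran_state and k m :: nat
  assumes wf: "ran_wf s"
begin

private abbreviation F where "F \<equiv> card (faces s)"

text \<open>Inserting into a face \<open>f\<close> yields \<open>baseline\<close>, which does not depend on \<open>f\<close>, plus one
  \<open>drift\<close> term per vertex of \<open>f\<close>.\<close>

private definition drift :: "nat \<Rightarrow> real" where
  "drift v = degree_prob k m (degree s v + 1) (face_degree s v + 1) (F + 2)
           - degree_prob k m (degree s v) (face_degree s v) (F + 2)"

private definition baseline :: real where
  "baseline = (\<Sum>v<nverts s. degree_prob k m (degree s v) (face_degree s v) (F + 2))
     + degree_prob k m 3 3 (F + 2) + new_vertex_count k m (F + 2)"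

private lemma sum_over_face:
  assumes "f \<in> faces s"
  shows "(\<Sum>v<nverts s. if v \<in> f then g v else 0) = sum g f"
proof -
  have "{v\<in>{..<nverts s}. v \<in> f} = f"
    using wf assms by (auto simp: ran_wf_def)
  then show ?thesis
    by (simp add: sum.inter_filter[symmetric])
qed

private lemma expected_Z_ran_insert:
  assumes f: "f \<in> faces s"
  shows "expected_Z k m (ran_insert s f) = baseline + (\<Sum>v\<in>f. drift v)"
proof -
  have "degree_prob k m (degree (ran_insert s f) v) (face_degree (ran_insert s f) v) (F + 2) =
      degree_prob k m (degree s v) (face_degree s v) (F + 2) + (if v \<in> f then drift v else 0)"
    if "v < nverts s" for v
    by (simp add: degree_ran_insert_old[OF wf f that] face_degree_ran_insert_old[OF wf f that]
        drift_def)
  then have "(\<Sum>v<nverts s.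
        degree_prob k m (degree (ran_insert s f) v) (face_degree (ran_insert s f) v) (F + 2)) =
      (\<Sum>v<nverts s. degree_prob k m (degree s v) (face_degree s v) (F + 2))
      + (\<Sum>v<nverts s. if v \<in> f then drift v else 0)"
    by (simp add: sum.distrib[symmetric])
  then show ?thesis
    unfolding expected_Z_def nverts_ran_insert sum.lessThan_Suc card_faces_ran_insert[OF wf f]
      degree_ran_insert_new[OF wf f] face_degree_ran_insert_new[OF wf f] baseline_def
      sum_over_face[OF f]
    by simp
qed

lemma expectation_ran_step_expected_Z:
  "measure_pmf.expectation (ran_step s) (expected_Z k m) = expected_Z k (Suc m) s"
proof -
  have fin: "finite (faces s)" and pos: "F > 0"
    using wf by (auto simp: ran_wf_def card_gt_0_iff)
  have vertex_step: "F * degree_prob k (Suc m) (degree s v) (face_degree s v) F =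
      F * degree_prob k m (degree s v) (face_degree s v) (F + 2) + face_degree s v * drift v" for v
    using pos by (simp add: drift_def field_simps)
  have "(\<Sum>f\<in>faces s. expected_Z k m (ran_insert s f)) =
      F * baseline + (\<Sum>v<nverts s. \<Sum>f\<in>faces s. if v \<in> f then drift v else 0)"
    by (simp add: expected_Z_ran_insert sum_over_face[symmetric] sum.distrib
        sum.swap[of _ "faces s"])
  also have "\<dots> = F * baseline + (\<Sum>v<nverts s. face_degree s v * drift v)"
    by (simp add: sum.inter_filter[OF fin, symmetric] face_degree_def)
  also have "\<dots> = F * expected_Z k (Suc m) s"
    unfolding expected_Z_def baseline_def distrib_left sum_distrib_left vertex_step
      new_vertex_count.simps
    by (simp add: sum.distrib algebra_simps)
  finally show ?thesis
    using pos by (simp add: expectation_ran_step[OF wf])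
qed

private lemma expected_Z_ran_insert_close:
  assumes "f \<in> faces s"
  shows "\<bar>expected_Z k m (ran_insert s f) - baseline\<bar> \<le> 3"
proof -
  have "\<bar>drift v\<bar> \<le> 1" for v
    using degree_prob_bounds[of "face_degree s v + 1" "F + 2" k m "degree s v + 1"]
      degree_prob_bounds[of "face_degree s v" "F + 2" k m "degree s v"] face_degree_le[OF wf, of v]
    by (auto simp: drift_def)
  then have "\<bar>\<Sum>v\<in>f. drift v\<bar> \<le> (\<Sum>v\<in>f. 1)"
    by (intro order_trans[OF sum_abs] sum_mono)
  also have "\<dots> = 3"
    using wf assms by (auto simp: ran_wf_def)
  finally show ?thesis
    by (simp add: expected_Z_ran_insert[OF assms])
qed

lemma expectation_ran_step_expected_Z_square:
  "measure_pmf.expectation (ran_step s) (\<lambda>s'. (expected_Z k m s')\<^sup>2)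
    \<le> (expected_Z k (Suc m) s)\<^sup>2 + 9"
  using expectation_square_le_of_bounded_deviation[of "ran_step s" "expected_Z k m" baseline 3]
    expected_Z_ran_insert_close wf
  by (auto simp: set_pmf_ran_step ran_wf_def expectation_ran_step_expected_Z)

end

lemma variance_Z_RAN_le: "measure_pmf.variance (RAN t) (\<lambda>s. real (Z k s)) \<le> 9 * t"
  using variance_RAN_le[of "expected_Z k" 9 t]
    expectation_ran_step_expected_Z expectation_ran_step_expected_Z_square
  by (simp add: expected_Z_0 [abs_def])

lemma deviation_prob_Z_RAN_le:
  assumes "a > 0"
  shows "measure_pmf.prob (RAN t)
      {s. \<bar>real (Z k s) - measure_pmf.expectation (RAN t) (\<lambda>s'. real (Z k s'))\<bar> \<ge> a}
    \<le> 9 * t / a\<^sup>2"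
proof -
  have "measure_pmf.prob (RAN t)
      {s \<in> space (RAN t).
        \<bar>real (Z k s) - measure_pmf.expectation (RAN t) (\<lambda>s'. real (Z k s'))\<bar> \<ge> a}
    \<le> measure_pmf.variance (RAN t) (\<lambda>s. real (Z k s)) / a\<^sup>2"
    using assms
    by (intro measure_pmf.Chebyshev_inequality)
       (simp_all add: integrable_measure_pmf_finite[OF finite_set_pmf_RAN])
  also have "\<dots> \<le> 9 * t / a\<^sup>2"
    by (intro divide_right_mono variance_Z_RAN_le) simp
  finally show ?thesis
    by simp
qed

lemma deviation_prob_Z_RAN_le_inverse_ln:
  assumes "t \<ge> 2"
  shows "measure_pmf.prob (RAN t)
      {s. \<bar>real (Z k s) - measure_pmf.expectation (RAN t) (\<lambda>s'. real (Z k s'))\<bar>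
          \<ge> sqrt (real t * ln (real t))}
    \<le> 9 / ln t"
proof -
  have "ln (real t) > 0"
    using assms by simp
  then show ?thesis
    using deviation_prob_Z_RAN_le[of "sqrt (real t * ln (real t))" t k] assms by simp
qed

theorem mainTheorem5:
  fixes k :: nat
  assumes "k \<ge> 3"
  shows "(\<lambda>t. measure_pmf.prob (RAN t)
            {s. \<bar>real (Z k s) - measure_pmf.expectation (RAN t) (\<lambda>s'. real (Z k s'))\<bar>
                \<ge> sqrt (real t * ln (real t))}) \<longlonglongrightarrow> 0"
proof (rule tendsto_sandwich[where f = "\<lambda>_. 0" and h = "\<lambda>t. 9 / ln (real t)"])
  show "(\<lambda>t. 9 / ln (real t)) \<longlonglongrightarrow> 0"
    by real_asymp
qed (auto intro: eventually_mono[OF eventually_ge_at_top[of 2]] deviation_prob_Z_RAN_le_inverse_ln)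

end
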